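(* Let $\alpha$ be a divergence, $E$ and $F$ Polish spaces, and $\mu,\nu\in\mathcal P(E)$ with $\nu\ll\mu$. Suppose a measurable map $T:E\to F$ is sufficient for $\{\mu,\nu\}$, meaning that $d\nu/d\mu$ (has a version that) is $\sigma(T)$-measurable. Then $\alpha(\nu\circ T^{-1}\,|\,\mu\circ T^{-1})=\alpha(\nu|\mu)$. In particular this holds if $T$ is a bijection with measurable inverse.
   Context: For a Polish space $E$, $\mathcal P(E)$ is the set of Borel probability measures on $E$. A kernel from $E$ to $F$ is a measurable map $E\ni x\mapsto K_x\in\mathcal P(F)$, and $\mu K:=\int_E\mu(dx)K_x(\cdot)\in\mathcal P(F)$. A divergence is a family of functions $\mathcal P(E)\ni\nu\mapsto\alpha(\nu|\mu)\in[0,\infty]$, one for each Polish space $E$ and each $\mu\in\mathcal P(E)$, each convex and lower semicontinuous with respect to total variation, such that: (1) $\alpha(\mu|\mu)=0$; (2) $\alpha(\nu|\mu)=\infty$ if $\nu$ is not absolutely continuous with respect to $\mu$; (3) $\alpha(\nu K|\mu K)\le\alpha(\nu|\mu)$ for all Polish $E,F$, all $\mu,\nu\in\mathcal P(E)$ and every kernel $K$ from $E$ to $F$. *)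

theory Defs
  imports "HOL-Probability.Probability"
begin

definition prob_measures :: "'a::topological_space measure set" where
  "prob_measures = {M. sets M = sets (borel :: 'a measure) \<and> prob_space M}"

definition mix_measure :: "real \<Rightarrow> 'a::topological_space measure \<Rightarrow> 'a measure \<Rightarrow> 'a measure" where
  "mix_measure t M N = measure_of (space (borel :: 'a measure)) (sets (borel :: 'a measure))
     (\<lambda>A. ennreal t * emeasure M A + ennreal (1 - t) * emeasure N A)"

definition tv_dist :: "'a::topological_space measure \<Rightarrow> 'a measure \<Rightarrow> real" where
  "tv_dist M N = (SUP A \<in> sets (borel :: 'a measure). \<bar>measure M A - measure N A\<bar>)"

definition kernels :: "('a::topological_space \<Rightarrow> 'b::topological_space measure) set" where
  "kernels = borel \<rightarrow>\<^sub>M prob_algebra borel"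

text \<open>Per-space part of the definition of a divergence: alpha nu mu stands for alpha(nu|mu),
  defined for mu, nu in P(E).\<close>
definition divergence_on :: "('a::topological_space measure \<Rightarrow> 'a measure \<Rightarrow> ennreal) \<Rightarrow> bool" where
  "divergence_on \<alpha> \<longleftrightarrow>
     (\<forall>\<mu>\<in>prob_measures.
        \<comment> \<open>convexity in the first argument\<close>
        (\<forall>\<nu>1\<in>prob_measures. \<forall>\<nu>2\<in>prob_measures. \<forall>t::real. 0 \<le> t \<and> t \<le> 1 \<longrightarrow>
           \<alpha> (mix_measure t \<nu>1 \<nu>2) \<mu> \<le> ennreal t * \<alpha> \<nu>1 \<mu> + ennreal (1 - t) * \<alpha> \<nu>2 \<mu>) \<and>
        \<comment> \<open>lower semicontinuity w.r.t. total variation (TV is a metric, so sequential)\<close>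
        (\<forall>\<nu>\<in>prob_measures. \<forall>\<nu>s. (\<forall>n. \<nu>s n \<in> prob_measures) \<longrightarrow>
           (\<lambda>n. tv_dist (\<nu>s n) \<nu>) \<longlonglongrightarrow> 0 \<longrightarrow> \<alpha> \<nu> \<mu> \<le> liminf (\<lambda>n. \<alpha> (\<nu>s n) \<mu>)) \<and>
        \<comment> \<open>(1)\<close>
        \<alpha> \<mu> \<mu> = 0 \<and>
        \<comment> \<open>(2)\<close>
        (\<forall>\<nu>\<in>prob_measures. \<not> absolutely_continuous \<mu> \<nu> \<longrightarrow> \<alpha> \<nu> \<mu> = \<infinity>))"

definition data_processing ::
  "('a::topological_space measure \<Rightarrow> 'a measure \<Rightarrow> ennreal) \<Rightarrow>
   ('b::topological_space measure \<Rightarrow> 'b measure \<Rightarrow> ennreal) \<Rightarrow> bool" where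
  "data_processing \<alpha> \<beta> \<longleftrightarrow>
     (\<forall>\<mu>\<in>prob_measures. \<forall>\<nu>\<in>prob_measures. \<forall>K\<in>(kernels :: ('a \<Rightarrow> 'b measure) set).
        \<beta> (\<nu> \<bind> K) (\<mu> \<bind> K) \<le> \<alpha> \<nu> \<mu>)"

text \<open>A divergence restricted to the two Polish spaces E ('e) and F ('f).\<close>
definition divergence_pair ::
  "('e::polish_space measure \<Rightarrow> 'e measure \<Rightarrow> ennreal) \<Rightarrow>
   ('f::polish_space measure \<Rightarrow> 'f measure \<Rightarrow> ennreal) \<Rightarrow> bool" where
  "divergence_pair \<alpha>E \<alpha>F \<longleftrightarrow>
     divergence_on \<alpha>E \<and> divergence_on \<alpha>F \<and>
     data_processing \<alpha>E \<alpha>E \<and> data_processing \<alpha>E \<alpha>F \<and>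
     data_processing \<alpha>F \<alpha>E \<and> data_processing \<alpha>F \<alpha>F"

definition sufficient_for :: "('e::topological_space \<Rightarrow> 'f::topological_space) \<Rightarrow> 'e measure \<Rightarrow> 'e measure \<Rightarrow> bool" where
  "sufficient_for T \<mu> \<nu> \<longleftrightarrow>
     (\<exists>h \<in> borel_measurable (vimage_algebra UNIV T (borel :: 'f measure)).
        AE x in \<mu>. RN_deriv \<mu> \<nu> x = h x)"

end

theory Submission
  imports Defs
begin

text \<open>Pushing forward along \<open>T\<close> is the deterministic kernel \<open>x \<mapsto> \<delta>\<^sub>T\<^sub>x\<close>, so data processing gives
  \<open>\<alpha>(\<nu>\<circ>T\<inverse> | \<mu>\<circ>T\<inverse>) \<le> \<alpha>(\<nu> | \<mu>)\<close>. For the converse, approximate \<open>f = d\<nu>/d\<mu>\<close> in \<open>L\<^sup>1(\<mu>)\<close> by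
  simple \<open>\<sigma>(T)\<close>-measurable functions \<open>s\<close>. Each cell \<open>{s = c}\<close> is a preimage \<open>T\<inverse>(B\<^sub>c)\<close>, so the kernel
  sending \<open>y \<in> B\<^sub>c\<close> to \<open>\<mu>\<close> conditioned on that cell maps \<open>\<mu>\<circ>T\<inverse>\<close> back to \<open>\<mu>\<close>, and maps
  \<open>\<nu>\<circ>T\<inverse>\<close> to the measure whose density is the cell average of \<open>f\<close>, which is within
  \<open>2\<parallel>f - s\<parallel>\<^sub>1\<close> of \<open>\<nu>\<close> in total variation. Data processing for these kernels and lower
  semicontinuity of \<open>\<alpha>\<close> give \<open>\<alpha>(\<nu> | \<mu>) \<le> \<alpha>(\<nu>\<circ>T\<inverse> | \<mu>\<circ>T\<inverse>)\<close>.\<close>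

lemma sets_prob_measures: "M \<in> prob_measures \<Longrightarrow> sets M = sets borel"
  unfolding prob_measures_def by simp

lemma space_prob_measures: "M \<in> prob_measures \<Longrightarrow> space M = UNIV"
  unfolding prob_measures_def by (auto dest: sets_eq_imp_space_eq)

lemma prob_measures_in_prob_algebra: "M \<in> prob_measures \<Longrightarrow> M \<in> space (prob_algebra borel)"
  unfolding prob_measures_def space_prob_algebra by auto

lemma measurable_prob_measures_iff:
  "M \<in> prob_measures \<Longrightarrow> f \<in> measurable M N \<longleftrightarrow> f \<in> measurable borel N"
  by (simp add: sets_prob_measures cong: measurable_cong_sets)

lemma distr_in_prob_measures:
  assumes "M \<in> prob_measures" "T \<in> borel_measurable borel"
  shows "distr M borel T \<in> prob_measures"
  using assms prob_space.prob_space_distr[of M T borel]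
  by (auto simp: prob_measures_def measurable_prob_measures_iff)

lemma bind_in_prob_measures:
  assumes M: "M \<in> prob_measures" and Q: "Q \<in> kernels"
  shows "M \<bind> Q \<in> prob_measures"
proof -
  have Q': "Q \<in> borel \<rightarrow>\<^sub>M prob_algebra borel" using Q unfolding kernels_def .
  show ?thesis
    using prob_space_bind'[OF prob_measures_in_prob_algebra[OF M] Q']
      sets_bind'[OF prob_measures_in_prob_algebra[OF M] Q']
    unfolding prob_measures_def by auto
qed

lemma return_kernel_in_kernels:
  "T \<in> borel_measurable borel \<Longrightarrow> (\<lambda>x. return borel (T x)) \<in> kernels"
  unfolding kernels_def by (rule measurable_compose[OF _ measurable_return_prob_space])

lemma bind_return_kernel:
  "M \<in> prob_measures \<Longrightarrow> T \<in> borel_measurable borel \<Longrightarrow> M \<bind> (\<lambda>x. return borel (T x)) = distr M borel T"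
  by (rule bind_return_distr') (auto simp: space_prob_measures measurable_prob_measures_iff)

lemma data_processing_distr_le:
  assumes "data_processing \<alpha> \<beta>" "\<mu> \<in> prob_measures" "\<nu> \<in> prob_measures" "T \<in> borel_measurable borel"
  shows "\<beta> (distr \<nu> borel T) (distr \<mu> borel T) \<le> \<alpha> \<nu> \<mu>"
  using assms return_kernel_in_kernels[OF assms(4)]
  unfolding data_processing_def bind_return_kernel[OF assms(2,4), symmetric] bind_return_kernel[OF assms(3,4), symmetric]
  by blast

lemma sum_indicator_level_sets:
  fixes s :: "'a \<Rightarrow> 'c" and w :: "'c \<Rightarrow> 'b::semiring_1"
  assumes "finite (s ` space M)" "x \<in> space M"
  shows "(\<Sum>c\<in>s ` space M. indicator (s -` {c} \<inter> space M) x * w c) = w (s x)"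
proof -
  have "(\<Sum>c\<in>s ` space M. indicator (s -` {c} \<inter> space M) x * w c) = (\<Sum>c\<in>s ` space M. if s x = c then w c else 0)"
    using assms(2) by (intro sum.cong) (auto split: split_indicator)
  also have "\<dots> = w (s x)"
    using assms by (simp add: sum.delta)
  finally show ?thesis .
qed

lemma integrable_indicator_mult:
  fixes f :: "'a \<Rightarrow> real"
  shows "S \<in> sets M \<Longrightarrow> integrable M f \<Longrightarrow> integrable M (\<lambda>x. indicator S x * f x)"
  using integrable_mult_indicator[of S M f] by simp

lemma (in finite_measure) integral_indicator_mult_shift:
  fixes f :: "'a \<Rightarrow> real"
  assumes S: "S \<in> sets M" and f: "integrable M f"
  shows "(\<integral>x. indicator S x * f x \<partial>M) = (\<integral>x. indicator S x * (f x - c) \<partial>M) + c * measure M S"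
proof -
  have "(\<integral>x. indicator S x * f x \<partial>M) = (\<integral>x. indicator S x * (f x - c) + c * indicator S x \<partial>M)"
    by (rule Bochner_Integration.integral_cong) (auto simp: algebra_simps)
  also have "\<dots> = (\<integral>x. indicator S x * (f x - c) \<partial>M) + (\<integral>x. c * indicator S x \<partial>M)"
    using S f by (intro Bochner_Integration.integral_add integrable_indicator_mult)
      (auto simp: emeasure_eq_measure)
  also have "(\<integral>x. c * indicator S x \<partial>M) = c * measure M S"
    using S by simp
  finally show ?thesis .
qed

lemma abs_integral_indicator_mult_le:
  fixes g :: "'a \<Rightarrow> real"
  shows "\<bar>\<integral>x. indicator S x * g x \<partial>M\<bar> \<le> (\<integral>x. indicator S x * \<bar>g x\<bar> \<partial>M)"
proof -
  have "\<bar>\<integral>x. indicator S x * g x \<partial>M\<bar> \<le> (\<integral>x. \<bar>indicator S x * g x\<bar> \<partial>M)"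
    by (rule integral_abs_bound)
  also have "\<dots> = (\<integral>x. indicator S x * \<bar>g x\<bar> \<partial>M)"
    by (rule Bochner_Integration.integral_cong) (auto simp: abs_mult)
  finally show ?thesis .
qed

text \<open>Replacing \<open>f\<close> by \<open>f - c\<close> changes both terms by \<open>c * measure M (A \<inter> X)\<close>; afterwards each
  term is bounded by the \<open>L\<^sup>1\<close> norm of \<open>f - c\<close> on \<open>A\<close>.\<close>
lemma (in finite_measure) cell_average_deviation_le:
  fixes f :: "'a \<Rightarrow> real"
  assumes A: "A \<in> sets M" and X: "X \<in> sets M" and f: "integrable M f"
  shows "\<bar>(\<integral>x. indicator (A \<inter> X) x * f x \<partial>M) - (\<integral>x. indicator A x * f x \<partial>M) * measure M (A \<inter> X) / measure M A\<bar>
         \<le> 2 * (\<integral>x. indicator A x * \<bar>f x - c\<bar> \<partial>M)"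
proof -
  have AX: "A \<inter> X \<in> sets M" using A X by auto
  define J where "J = (\<integral>x. indicator A x * \<bar>f x - c\<bar> \<partial>M)"
  define I1 where "I1 = (\<integral>x. indicator (A \<inter> X) x * (f x - c) \<partial>M)"
  define I2 where "I2 = (\<integral>x. indicator A x * (f x - c) \<partial>M)"
  define m where "m = measure M (A \<inter> X)"
  define a where "a = measure M A"
  have "(\<integral>x. indicator (A \<inter> X) x * \<bar>f x - c\<bar> \<partial>M) \<le> J"
    unfolding J_def using A AX f
    by (intro integral_mono integrable_indicator_mult) (auto split: split_indicator)
  then have I1: "\<bar>I1\<bar> \<le> J"
    using abs_integral_indicator_mult_le[where S="A \<inter> X" and g="\<lambda>x. f x - c" and M=M] unfolding I1_def by linarith
  have I2: "\<bar>I2\<bar> \<le> J"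
    using abs_integral_indicator_mult_le[where S=A and g="\<lambda>x. f x - c" and M=M] unfolding I2_def J_def .
  have ma: "0 \<le> m" "m \<le> a"
    unfolding m_def a_def using A by (auto intro!: finite_measure_mono)
  have "\<bar>I1 + c * m - (I2 + c * a) * m / a\<bar> \<le> 2 * J"
  proof (cases "a = 0")
    case True
    then show ?thesis using ma I1 by simp
  next
    case False
    then have "0 < a" using ma by simp
    then have "0 \<le> m / a" "m / a \<le> 1" using ma by auto
    then have "\<bar>I2 * (m / a)\<bar> \<le> J"
      using I2 ma \<open>0 < a\<close> mult_left_le[of "m / a" "\<bar>I2\<bar>"] by (simp add: abs_mult)
    moreover have "I1 + c * m - (I2 + c * a) * m / a = I1 - I2 * (m / a)"
      using \<open>0 < a\<close> by (simp add: field_simps)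
    ultimately show ?thesis using I1 by linarith
  qed
  then show ?thesis
    unfolding integral_indicator_mult_shift[OF AX f, of c] integral_indicator_mult_shift[OF A f, of c]
    unfolding I1_def[symmetric] I2_def[symmetric] m_def[symmetric] a_def[symmetric] J_def[symmetric] .
qed

lemma (in finite_measure) partition_average_deviation_le:
  fixes f s :: "'a \<Rightarrow> real"
  assumes f: "integrable M f" and s: "simple_function M s" and X: "X \<in> sets M"
  shows "\<bar>(\<integral>x. indicator X x * f x \<partial>M) -
          (\<Sum>c\<in>s ` space M. (\<integral>x. indicator (s -` {c} \<inter> space M) x * f x \<partial>M)
              * measure M (s -` {c} \<inter> space M \<inter> X) / measure M (s -` {c} \<inter> space M))\<bar>
         \<le> 2 * (\<integral>x. \<bar>f x - s x\<bar> \<partial>M)"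
proof -
  define R where "R = s ` space M"
  define L where "L c = s -` {c} \<inter> space M" for c
  have R: "finite R" and L: "\<And>c. c \<in> R \<Longrightarrow> L c \<in> sets M"
    using s unfolding simple_function_def R_def L_def by auto
  have "(\<integral>x. indicator X x * f x \<partial>M) = (\<integral>x. (\<Sum>c\<in>R. indicator (L c) x * (indicator X x * f x)) \<partial>M)"
    using sum_indicator_level_sets[OF R[unfolded R_def], of _ "\<lambda>_. indicator X _ * f _"]
    by (intro Bochner_Integration.integral_cong) (auto simp: R_def L_def)
  also have "\<dots> = (\<Sum>c\<in>R. \<integral>x. indicator (L c \<inter> X) x * f x \<partial>M)"
    using L X f by (subst Bochner_Integration.integral_sum)
      (auto intro: integrable_indicator_mult simp: indicator_inter_arith mult.assoc)
  finally have split: "(\<integral>x. indicator X x * f x \<partial>M) = (\<Sum>c\<in>R. \<integral>x. indicator (L c \<inter> X) x * f x \<partial>M)" .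
  have "(\<integral>x. \<bar>f x - s x\<bar> \<partial>M) = (\<integral>x. (\<Sum>c\<in>R. indicator (L c) x * \<bar>f x - c\<bar>) \<partial>M)"
    using sum_indicator_level_sets[OF R[unfolded R_def], of _ "\<lambda>c. \<bar>f _ - c\<bar>"]
    by (intro Bochner_Integration.integral_cong) (auto simp: R_def L_def)
  also have "\<dots> = (\<Sum>c\<in>R. \<integral>x. indicator (L c) x * \<bar>f x - c\<bar> \<partial>M)"
    using L f by (intro Bochner_Integration.integral_sum integrable_indicator_mult) auto
  finally have split_abs: "(\<integral>x. \<bar>f x - s x\<bar> \<partial>M) = (\<Sum>c\<in>R. \<integral>x. indicator (L c) x * \<bar>f x - c\<bar> \<partial>M)" .
  have "\<bar>\<Sum>c\<in>R. (\<integral>x. indicator (L c \<inter> X) x * f x \<partial>M) -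
          (\<integral>x. indicator (L c) x * f x \<partial>M) * measure M (L c \<inter> X) / measure M (L c)\<bar>
     \<le> (\<Sum>c\<in>R. \<bar>(\<integral>x. indicator (L c \<inter> X) x * f x \<partial>M) -
          (\<integral>x. indicator (L c) x * f x \<partial>M) * measure M (L c \<inter> X) / measure M (L c)\<bar>)"
    by (rule sum_abs)
  also have "\<dots> \<le> (\<Sum>c\<in>R. 2 * (\<integral>x. indicator (L c) x * \<bar>f x - c\<bar> \<partial>M))"
    using L X f by (intro sum_mono cell_average_deviation_le)
  also have "\<dots> = 2 * (\<integral>x. \<bar>f x - s x\<bar> \<partial>M)"
    by (simp add: split_abs sum_distrib_left)
  finally show ?thesis
    by (simp add: split sum_subtractf R_def L_def)
qed

lemma (in sigma_finite_measure) nn_integral_real_RN_deriv: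
  assumes \<nu>: "finite_measure \<nu>" "sets \<nu> = sets M" and ac: "absolutely_continuous M \<nu>"
    and X: "X \<in> sets M"
  shows "(\<integral>\<^sup>+x. ennreal (enn2real (RN_deriv M \<nu> x)) * indicator X x \<partial>M) = emeasure \<nu> X"
proof -
  have "AE x in M. RN_deriv M \<nu> x \<noteq> \<infinity>"
    using \<nu> ac by (intro RN_deriv_finite finite_measure.sigma_finite_measure) auto
  then have "(\<integral>\<^sup>+x. ennreal (enn2real (RN_deriv M \<nu> x)) * indicator X x \<partial>M) =
      (\<integral>\<^sup>+x. RN_deriv M \<nu> x * indicator X x \<partial>M)"
    by (intro nn_integral_cong_AE) (auto elim!: eventually_mono simp: less_top)
  also have "\<dots> = emeasure (density M (RN_deriv M \<nu>)) X"
    using X by (simp add: emeasure_density)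
  also have "\<dots> = emeasure \<nu> X"
    using \<nu> ac by (simp add: density_RN_deriv)
  finally show ?thesis .
qed

lemma (in sigma_finite_measure) integrable_real_RN_deriv:
  assumes "finite_measure \<nu>" "sets \<nu> = sets M" "absolutely_continuous M \<nu>"
  shows "integrable M (\<lambda>x. enn2real (RN_deriv M \<nu> x))"
proof (rule integrableI_nonneg)
  have "(\<integral>\<^sup>+x. ennreal (enn2real (RN_deriv M \<nu> x)) \<partial>M) =
      (\<integral>\<^sup>+x. ennreal (enn2real (RN_deriv M \<nu> x)) * indicator (space M) x \<partial>M)"
    by (intro nn_integral_cong) simp
  also have "\<dots> = emeasure \<nu> (space M)"
    using nn_integral_real_RN_deriv[OF assms sets.top] .
  finally have "(\<integral>\<^sup>+x. ennreal (enn2real (RN_deriv M \<nu> x)) \<partial>M) = emeasure \<nu> (space M)" .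
  then show "(\<integral>\<^sup>+x. ennreal (enn2real (RN_deriv M \<nu> x)) \<partial>M) < \<infinity>"
    using finite_measure.emeasure_finite[OF assms(1)] by (simp add: less_top)
qed auto

lemma (in sigma_finite_measure) measure_eq_integral_real_RN_deriv:
  assumes \<nu>: "finite_measure \<nu>" "sets \<nu> = sets M" "absolutely_continuous M \<nu>" and X: "X \<in> sets M"
  shows "measure \<nu> X = (\<integral>x. indicator X x * enn2real (RN_deriv M \<nu> x) \<partial>M)"
proof -
  have "(\<integral>x. indicator X x * enn2real (RN_deriv M \<nu> x) \<partial>M) =
      enn2real (\<integral>\<^sup>+x. ennreal (indicator X x * enn2real (RN_deriv M \<nu> x)) \<partial>M)"
    using X by (intro integral_eq_nn_integral) auto
  also have "(\<integral>\<^sup>+x. ennreal (indicator X x * enn2real (RN_deriv M \<nu> x)) \<partial>M) = emeasure \<nu> X"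
    unfolding nn_integral_real_RN_deriv[OF \<nu> X, symmetric]
    by (intro nn_integral_cong) (auto split: split_indicator)
  finally show ?thesis
    by (simp add: measure_def)
qed

lemma simple_function_L1_approx_subalgebra:
  fixes f g :: "'a \<Rightarrow> real"
  assumes sub: "subalgebra M N" and f: "integrable M f"
    and g: "g \<in> borel_measurable N" and fg: "AE x in M. f x = g x"
  obtains s where "\<And>i. simple_function N (s i)" "(\<lambda>i. \<integral>x. \<bar>f x - s i x\<bar> \<partial>M) \<longlonglongrightarrow> 0"
proof -
  define M' where "M' = restr_to_subalg M N"
  have "integrable M g"
    using f measurable_from_subalg[OF sub g] fg by (rule integrable_cong_AE_imp)
  then have "integrable M' g"
    unfolding M'_def by (rule integrable_in_subalg[OF sub g])
  then have "has_bochner_integral M' g (integral\<^sup>L M' g)"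
    by (rule has_bochner_integral_integrable)
  then obtain s where s: "\<And>i. Bochner_Integration.simple_bochner_integrable M' (s i)"
    and lim: "(\<lambda>i. \<integral>\<^sup>+x. norm (g x - s i x) \<partial>M') \<longlonglongrightarrow> 0"
    by (cases rule: has_bochner_integral.cases) blast
  have sets_M': "sets M' = sets N" and space_M': "space M' = space N"
    unfolding M'_def using sub by (auto simp: sets_restr_to_subalg space_restr_to_subalg subalgebra_def)
  have simple: "simple_function N (s i)" for i
    using s[of i] simple_function_cong_algebra[OF sets_M' space_M']
    by (auto elim: Bochner_Integration.simple_bochner_integrable.cases)
  have L1_dist: "(\<integral>x. \<bar>f x - s i x\<bar> \<partial>M) = enn2real (\<integral>\<^sup>+x. norm (g x - s i x) \<partial>M')" for i
  proof -
    have sM: "s i \<in> borel_measurable M"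
      using measurable_from_subalg[OF sub borel_measurable_simple_function[OF simple]] .
    have "(\<integral>x. \<bar>f x - s i x\<bar> \<partial>M) = enn2real (\<integral>\<^sup>+x. ennreal \<bar>f x - s i x\<bar> \<partial>M)"
      using borel_measurable_integrable[OF f] sM
      by (intro integral_eq_nn_integral borel_measurable_abs borel_measurable_diff) auto
    also have "(\<integral>\<^sup>+x. ennreal \<bar>f x - s i x\<bar> \<partial>M) = (\<integral>\<^sup>+x. norm (g x - s i x) \<partial>M)"
      by (rule nn_integral_cong_AE) (use fg in eventually_elim, simp)
    also have "\<dots> = (\<integral>\<^sup>+x. norm (g x - s i x) \<partial>M')"
      unfolding M'_def
    proof (intro nn_integral_subalgebra2[OF sub, symmetric])
      show "(\<lambda>x. ennreal (norm (g x - s i x))) \<in> borel_measurable N"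
        using g borel_measurable_simple_function[OF simple]
        by (intro measurable_compose[OF _ measurable_ennreal] measurable_compose[OF _ borel_measurable_norm]
            borel_measurable_diff)
    qed
    finally show ?thesis .
  qed
  have "(\<lambda>i. \<integral>x. \<bar>f x - s i x\<bar> \<partial>M) \<longlonglongrightarrow> 0"
    unfolding L1_dist using tendsto_enn2real[of _ 0] lim by simp
  with simple show ?thesis
    by (rule that)
qed

lemma nn_integral_comp_simple_function:
  assumes s: "simple_function M s"
  shows "(\<integral>\<^sup>+x. w (s x) \<partial>M) = (\<Sum>c\<in>s ` space M. w c * emeasure M (s -` {c} \<inter> space M))"
proof -
  have "(\<integral>\<^sup>+x. w (s x) \<partial>M) = (\<integral>\<^sup>+x. (\<Sum>c\<in>s ` space M. indicator (s -` {c} \<inter> space M) x * w c) \<partial>M)"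
    using s sum_indicator_level_sets[of s M _ w] by (intro nn_integral_cong) (simp add: simple_function_def)
  also have "\<dots> = (\<Sum>c\<in>s ` space M. \<integral>\<^sup>+x. w c * indicator (s -` {c} \<inter> space M) x \<partial>M)"
    using s by (subst nn_integral_sum) (auto simp: simple_function_def mult.commute)
  also have "\<dots> = (\<Sum>c\<in>s ` space M. w c * emeasure M (s -` {c} \<inter> space M))"
    using s by (intro sum.cong refl nn_integral_cmult_indicator) (auto simp: simple_function_def)
  finally show ?thesis .
qed

lemma simple_function_vimage_algebra_factor:
  fixes T :: "'e \<Rightarrow> 'f::topological_space" and s :: "'e \<Rightarrow> real"
  assumes s: "simple_function (vimage_algebra UNIV T borel) s"
  obtains g where "finite (range g)" "g \<in> borel \<rightarrow>\<^sub>M count_space (range g)" "\<And>x. g (T x) = s x"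
proof -
  have fin: "finite (range s)" and lev: "\<And>c. c \<in> range s \<Longrightarrow> s -` {c} \<in> sets (vimage_algebra UNIV T borel)"
    using s unfolding simple_function_def by auto
  have "\<exists>B\<in>sets borel. s -` {c} = T -` B" if "c \<in> range s" for c
    using lev[OF that] by (auto simp: sets_vimage_algebra2)
  then obtain B where B: "\<And>c. c \<in> range s \<Longrightarrow> B c \<in> sets (borel :: 'f measure)"
    "\<And>c. c \<in> range s \<Longrightarrow> s -` {c} = T -` B c"
    by metis
  define g where "g y = (\<Sum>c\<in>range s. c * indicator (B c) y)" for y
  have "g (T x) = s x" for x
  proof -
    have "T x \<in> B c \<longleftrightarrow> s x = c" if "c \<in> range s" for c
      using B(2)[OF that] by blast
    then have "g (T x) = (\<Sum>c\<in>range s. indicator (s -` {c} \<inter> space (count_space UNIV)) x * c)"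
      unfolding g_def by (intro sum.cong) (auto split: split_indicator)
    also have "\<dots> = s x"
      using sum_indicator_level_sets[of s "count_space UNIV" x "\<lambda>c. c"] fin by simp
    finally show ?thesis .
  qed
  moreover have fin_g: "finite (range g)"
  proof (rule finite_subset)
    show "range g \<subseteq> sum (\<lambda>c. c) ` Pow (range s)"
    proof
      fix z assume "z \<in> range g"
      then obtain y where "z = g y" by auto
      also have "g y = (\<Sum>c\<in>range s. if y \<in> B c then c else 0)"
        unfolding g_def by (intro sum.cong) (auto split: split_indicator)
      also have "\<dots> = (\<Sum>c\<in>{c\<in>range s. y \<in> B c}. c)"
        using fin by (simp add: sum.inter_filter)
      finally show "z \<in> sum (\<lambda>c. c) ` Pow (range s)" by blast
    qed
  qed (use fin in simp)
  moreover have "g \<in> borel \<rightarrow>\<^sub>M count_space (range g)"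
  proof -
    have "g \<in> borel_measurable borel"
      unfolding g_def using B(1) by (intro borel_measurable_sum borel_measurable_times borel_measurable_indicator) auto
    then show ?thesis
      unfolding measurable_count_space_eq2[OF fin_g] using measurable_sets[of g borel borel "{a}" for a] by auto
  qed
  ultimately show ?thesis using that by blast
qed

lemma subalgebra_vimage_algebra:
  assumes "M \<in> prob_measures" "T \<in> borel_measurable borel"
  shows "subalgebra M (vimage_algebra UNIV T borel)"
  using assms measurable_sets[of T borel borel]
  unfolding subalgebra_def by (auto simp: sets_vimage_algebra2 space_prob_measures sets_prob_measures)

lemma simple_function_vimage_algebra_level_sets:
  fixes s :: "'a::topological_space \<Rightarrow> real"
  assumes "M \<in> prob_measures" "T \<in> borel_measurable borel"
    and "simple_function (vimage_algebra UNIV T borel) s"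
  shows "s -` {c} \<in> sets M"
  using subalgebra_vimage_algebra[OF assms(1,2)] measurable_sets[OF borel_measurable_simple_function[OF assms(3)], of "{c}"]
  unfolding subalgebra_def by auto

text \<open>On a null set \<open>A\<close> the conditional measure is junk, chosen as \<open>M\<close> itself so that it is always
  a probability measure.\<close>
definition cond_prob :: "'a measure \<Rightarrow> 'a set \<Rightarrow> 'a measure" where
  "cond_prob M A = (if emeasure M A = 0 then M else uniform_measure M A)"

lemma cond_prob_in_prob_measures: "M \<in> prob_measures \<Longrightarrow> cond_prob M A \<in> prob_measures"
  unfolding prob_measures_def cond_prob_def
  by (auto intro!: prob_space_uniform_measure simp: finite_measure.emeasure_finite prob_space.finite_measure)

lemma (in finite_measure) emeasure_mult_cond_prob:
  assumes "A \<in> sets M" "X \<in> sets M"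
  shows "emeasure M A * emeasure (cond_prob M A) X = emeasure M (A \<inter> X)"
proof (cases "emeasure M A = 0")
  case True
  then show ?thesis
    using emeasure_mono[of "A \<inter> X" A M] assms by simp
next
  case False
  then show ?thesis
    using assms emeasure_finite[of A]
    using ennreal_mult_divide_eq[of "emeasure M A" "emeasure M (A \<inter> X)"]
    by (simp add: cond_prob_def ennreal_times_divide mult.commute)
qed

lemma cell_kernel:
  fixes \<mu> :: "'e::topological_space measure" and T :: "'e \<Rightarrow> 'f::topological_space"
    and s :: "'e \<Rightarrow> real"
  assumes \<mu>: "\<mu> \<in> prob_measures" and s: "simple_function (vimage_algebra UNIV T borel) s"
  obtains Q where "Q \<in> kernels" "\<And>x. Q (T x) = cond_prob \<mu> (s -` {s x})"
proof -
  obtain g where g: "finite (range g)" "g \<in> borel \<rightarrow>\<^sub>M count_space (range g)" "\<And>x. g (T x) = s x"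
    using simple_function_vimage_algebra_factor[OF s] by blast
  have "(\<lambda>y. cond_prob \<mu> (s -` {g y})) \<in> borel \<rightarrow>\<^sub>M prob_algebra borel"
  proof (rule measurable_compose_countable'[where f="\<lambda>c _. cond_prob \<mu> (s -` {c})"])
    show "(\<lambda>_. cond_prob \<mu> (s -` {c})) \<in> borel \<rightarrow>\<^sub>M prob_algebra borel" for c
      by (intro measurable_const prob_measures_in_prob_algebra cond_prob_in_prob_measures \<mu>)
  qed (use g(1,2) countable_finite in blast)+
  then show ?thesis
    using that g(3) unfolding kernels_def by simp
qed

lemma emeasure_bind_distr:
  assumes M: "M \<in> prob_measures" and T: "T \<in> borel_measurable borel"
    and Q: "Q \<in> kernels" and X: "X \<in> sets borel"
  shows "emeasure (distr M borel T \<bind> Q) X = (\<integral>\<^sup>+x. emeasure (Q (T x)) X \<partial>M)"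
proof -
  have Q': "Q \<in> borel \<rightarrow>\<^sub>M prob_algebra borel"
    using Q unfolding kernels_def .
  then have "(\<lambda>y. emeasure (Q y) X) \<in> borel_measurable borel"
    by (rule measurable_compose[OF measurable_prob_algebraD measurable_emeasure_subprob_algebra[OF X]])
  moreover have "T \<in> M \<rightarrow>\<^sub>M borel"
    using T measurable_prob_measures_iff[OF M] by blast
  ultimately show ?thesis
    unfolding emeasure_bind_prob_algebra[OF prob_measures_in_prob_algebra[OF distr_in_prob_measures[OF M T]] Q' X]
    by (intro nn_integral_distr) (simp_all only: measurable_distr_eq1)
qed

lemma emeasure_bind_distr_cell_kernel:
  fixes s :: "'e::topological_space \<Rightarrow> real" and T :: "'e \<Rightarrow> 'f::topological_space"
  assumes M: "M \<in> prob_measures" and T: "T \<in> borel_measurable borel"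
    and s: "simple_function (vimage_algebra UNIV T borel) s"
    and Q: "Q \<in> kernels" "\<And>x. Q (T x) = cond_prob \<mu> (s -` {s x})" and X: "X \<in> sets borel"
  shows "emeasure (distr M borel T \<bind> Q) X =
    (\<Sum>c\<in>range s. emeasure (cond_prob \<mu> (s -` {c})) X * emeasure M (s -` {c}))"
proof -
  have "simple_function M s"
    using simple_function_subalgebra[OF s] subalgebra_vimage_algebra[OF M T]
    unfolding subalgebra_def by simp
  then show ?thesis
    unfolding emeasure_bind_distr[OF M T Q(1) X] Q(2)
    using nn_integral_comp_simple_function[of M s "\<lambda>c. emeasure (cond_prob \<mu> (s -` {c})) X"]
    by (simp add: space_prob_measures[OF M])
qed

lemma bind_distr_cell_kernel_eq:
  fixes s :: "'e::topological_space \<Rightarrow> real" and T :: "'e \<Rightarrow> 'f::topological_space"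
  assumes \<mu>: "\<mu> \<in> prob_measures" and T: "T \<in> borel_measurable borel"
    and s: "simple_function (vimage_algebra UNIV T borel) s"
    and Q: "Q \<in> kernels" "\<And>x. Q (T x) = cond_prob \<mu> (s -` {s x})"
  shows "distr \<mu> borel T \<bind> Q = \<mu>"
proof (rule measure_eqI)
  interpret prob_space \<mu> using \<mu> unfolding prob_measures_def by simp
  have lev: "s -` {c} \<in> sets \<mu>" for c
    using \<mu> T s by (rule simple_function_vimage_algebra_level_sets)
  show sets_eq: "sets (distr \<mu> borel T \<bind> Q) = sets \<mu>"
    using bind_in_prob_measures[OF distr_in_prob_measures[OF \<mu> T] Q(1)] \<mu> by (simp add: sets_prob_measures)
  fix X assume "X \<in> sets (distr \<mu> borel T \<bind> Q)"
  then have X: "X \<in> sets \<mu>" "X \<in> sets borel"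
    using sets_eq \<mu> by (auto simp: sets_prob_measures)
  have fin: "finite (range s)"
    using s unfolding simple_function_def by simp
  have "emeasure (distr \<mu> borel T \<bind> Q) X = (\<Sum>c\<in>range s. emeasure \<mu> (s -` {c} \<inter> X))"
    unfolding emeasure_bind_distr_cell_kernel[OF \<mu> T s Q X(2)]
    using emeasure_mult_cond_prob[OF lev X(1)] by (simp add: mult.commute)
  also have "\<dots> = emeasure \<mu> (\<Union>c\<in>range s. s -` {c} \<inter> X)"
    using lev X fin by (intro sum_emeasure) (auto simp: disjoint_family_on_def)
  also have "(\<Union>c\<in>range s. s -` {c} \<inter> X) = X"
    by auto
  finally show "emeasure (distr \<mu> borel T \<bind> Q) X = emeasure \<mu> X" .
qed

lemma emeasure_cond_prob_mult_abs_cont: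
  assumes \<mu>: "prob_space \<mu>" and \<nu>: "finite_measure \<nu>" "sets \<nu> = sets \<mu>"
    and ac: "absolutely_continuous \<mu> \<nu>" and A: "A \<in> sets \<mu>" and X: "X \<in> sets \<mu>"
  shows "emeasure (cond_prob \<mu> A) X * emeasure \<nu> A = ennreal (measure \<nu> A * measure \<mu> (A \<inter> X) / measure \<mu> A)"
proof (cases "emeasure \<mu> A = 0")
  case True
  then have "A \<in> null_sets \<nu>"
    using A ac unfolding absolutely_continuous_def by auto
  then show ?thesis
    using True by (simp add: measure_def null_setsD1)
next
  case False
  interpret prob_space \<mu> by fact
  interpret \<nu>: finite_measure \<nu> by fact
  have "0 < measure \<mu> A"
    using False by (simp add: emeasure_eq_measure zero_less_measure_iff)
  then show ?thesis
    using False A X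
    by (simp add: cond_prob_def emeasure_eq_measure \<nu>.emeasure_eq_measure divide_ennreal
        ennreal_mult[symmetric] mult.commute)
qed

lemma measure_bind_distr_cell_kernel:
  fixes s :: "'e::topological_space \<Rightarrow> real" and T :: "'e \<Rightarrow> 'f::topological_space"
  assumes \<mu>: "\<mu> \<in> prob_measures" and \<nu>: "\<nu> \<in> prob_measures" and ac: "absolutely_continuous \<mu> \<nu>"
    and T: "T \<in> borel_measurable borel" and s: "simple_function (vimage_algebra UNIV T borel) s"
    and Q: "Q \<in> kernels" "\<And>x. Q (T x) = cond_prob \<mu> (s -` {s x})" and X: "X \<in> sets borel"
  shows "measure (distr \<nu> borel T \<bind> Q) X =
    (\<Sum>c\<in>range s. measure \<nu> (s -` {c}) * measure \<mu> (s -` {c} \<inter> X) / measure \<mu> (s -` {c}))"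
proof -
  have lev: "s -` {c} \<in> sets \<mu>" for c
    using \<mu> T s by (rule simple_function_vimage_algebra_level_sets)
  have "emeasure (distr \<nu> borel T \<bind> Q) X =
      (\<Sum>c\<in>range s. ennreal (measure \<nu> (s -` {c}) * measure \<mu> (s -` {c} \<inter> X) / measure \<mu> (s -` {c})))"
    unfolding emeasure_bind_distr_cell_kernel[OF \<nu> T s Q X]
    using \<mu> \<nu> ac lev X
    by (intro sum.cong refl emeasure_cond_prob_mult_abs_cont)
      (auto simp: prob_measures_def prob_space.finite_measure)
  then show ?thesis
    by (simp add: measure_def sum_nonneg)
qed

lemma abs_measure_bind_distr_cell_kernel_le:
  fixes s :: "'e::topological_space \<Rightarrow> real" and T :: "'e \<Rightarrow> 'f::topological_space"
  assumes \<mu>: "\<mu> \<in> prob_measures" and \<nu>: "\<nu> \<in> prob_measures" and ac: "absolutely_continuous \<mu> \<nu>"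
    and T: "T \<in> borel_measurable borel" and s: "simple_function (vimage_algebra UNIV T borel) s"
    and Q: "Q \<in> kernels" "\<And>x. Q (T x) = cond_prob \<mu> (s -` {s x})" and A: "A \<in> sets borel"
  shows "\<bar>measure (distr \<nu> borel T \<bind> Q) A - measure \<nu> A\<bar>
    \<le> 2 * (\<integral>x. \<bar>enn2real (RN_deriv \<mu> \<nu> x) - s x\<bar> \<partial>\<mu>)"
proof -
  interpret prob_space \<mu> using \<mu> unfolding prob_measures_def by simp
  have \<nu>_fin: "finite_measure \<nu>" and sets_\<nu>: "sets \<nu> = sets \<mu>"
    using \<mu> \<nu> by (auto simp: prob_measures_def prob_space.finite_measure)
  have \<nu>_eq: "measure \<nu> X = (\<integral>x. indicator X x * enn2real (RN_deriv \<mu> \<nu> x) \<partial>\<mu>)" if "X \<in> sets \<mu>" for X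
    using \<nu>_fin sets_\<nu> ac that by (rule measure_eq_integral_real_RN_deriv)
  have "simple_function \<mu> s"
    using simple_function_subalgebra[OF s] subalgebra_vimage_algebra[OF \<mu> T]
    unfolding subalgebra_def by simp
  moreover have "s -` {c} \<in> sets \<mu>" for c
    using \<mu> T s by (rule simple_function_vimage_algebra_level_sets)
  ultimately show ?thesis
    using partition_average_deviation_le[OF integrable_real_RN_deriv[OF \<nu>_fin sets_\<nu> ac], of s A] A \<mu>
    unfolding measure_bind_distr_cell_kernel[OF \<mu> \<nu> ac T s Q A]
    by (simp add: \<nu>_eq space_prob_measures sets_prob_measures abs_minus_commute)
qed

lemma tv_dist_tendsto_zero:
  fixes M :: "nat \<Rightarrow> 'a::topological_space measure"
  assumes bound: "\<And>i A. A \<in> sets borel \<Longrightarrow> \<bar>measure (M i) A - measure N A\<bar> \<le> e i"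
    and "e \<longlonglongrightarrow> 0"
  shows "(\<lambda>i. tv_dist (M i) N) \<longlonglongrightarrow> 0"
proof (rule tendsto_sandwich[of "\<lambda>_. 0" _ _ e])
  have "tv_dist (M i) N \<le> e i" for i
    unfolding tv_dist_def by (rule cSUP_least) (use bound in auto)
  moreover have "0 \<le> tv_dist (M i) N" for i
    unfolding tv_dist_def by (rule cSUP_upper2[of _ _ "{}"]) (use bound in \<open>auto simp: bdd_above_def\<close>)
  ultimately show "\<forall>\<^sub>F i in sequentially. 0 \<le> tv_dist (M i) N" "\<forall>\<^sub>F i in sequentially. tv_dist (M i) N \<le> e i"
    by auto
qed (use assms in auto)

lemma divergence_le_of_recovery_kernels:
  fixes \<alpha> :: "'e::topological_space measure \<Rightarrow> 'e measure \<Rightarrow> ennreal"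
    and \<beta> :: "'f::topological_space measure \<Rightarrow> 'f measure \<Rightarrow> ennreal"
  assumes \<alpha>: "divergence_on \<alpha>" and dp: "data_processing \<beta> \<alpha>"
    and \<mu>: "\<mu> \<in> prob_measures" and \<nu>: "\<nu> \<in> prob_measures"
    and \<mu>': "\<mu>' \<in> prob_measures" and \<nu>': "\<nu>' \<in> prob_measures"
    and Q: "\<And>i. Q i \<in> kernels" and recover: "\<And>i. \<mu>' \<bind> Q i = \<mu>"
    and approx: "(\<lambda>i. tv_dist (\<nu>' \<bind> Q i) \<nu>) \<longlonglongrightarrow> 0"
  shows "\<alpha> \<nu> \<mu> \<le> \<beta> \<nu>' \<mu>'"
proof -
  have lsc: "\<And>\<nu>s. (\<forall>i. \<nu>s i \<in> prob_measures) \<Longrightarrow> (\<lambda>i. tv_dist (\<nu>s i) \<nu>) \<longlonglongrightarrow> 0 \<Longrightarrow>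
      \<alpha> \<nu> \<mu> \<le> liminf (\<lambda>i. \<alpha> (\<nu>s i) \<mu>)"
    using \<alpha> \<mu> \<nu> unfolding divergence_on_def by blast
  have "\<alpha> \<nu> \<mu> \<le> liminf (\<lambda>i. \<alpha> (\<nu>' \<bind> Q i) \<mu>)"
    by (rule lsc) (use bind_in_prob_measures[OF \<nu>' Q] approx in auto)
  also have "\<dots> \<le> \<beta> \<nu>' \<mu>'"
  proof (rule Liminf_le)
    have "\<alpha> (\<nu>' \<bind> Q i) (\<mu>' \<bind> Q i) \<le> \<beta> \<nu>' \<mu>'" for i
      using dp \<mu>' \<nu>' Q unfolding data_processing_def by blast
    then show "\<forall>\<^sub>F i in sequentially. \<alpha> (\<nu>' \<bind> Q i) \<mu> \<le> \<beta> \<nu>' \<mu>'"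
      by (simp add: recover)
  qed simp
  finally show ?thesis .
qed

lemma sufficient_divergence_le_pushforward:
  fixes \<alpha>E :: "'e::topological_space measure \<Rightarrow> 'e measure \<Rightarrow> ennreal"
    and \<alpha>F :: "'f::topological_space measure \<Rightarrow> 'f measure \<Rightarrow> ennreal"
    and T :: "'e \<Rightarrow> 'f"
  assumes \<alpha>E: "divergence_on \<alpha>E" and dp: "data_processing \<alpha>F \<alpha>E"
    and \<mu>: "\<mu> \<in> prob_measures" and \<nu>: "\<nu> \<in> prob_measures" and ac: "absolutely_continuous \<mu> \<nu>"
    and T: "T \<in> borel_measurable borel" and suff: "sufficient_for T \<mu> \<nu>"
  shows "\<alpha>E \<nu> \<mu> \<le> \<alpha>F (distr \<nu> borel T) (distr \<mu> borel T)"
proof -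
  define V where "V = vimage_algebra UNIV T (borel :: 'f measure)"
  define f where "f x = enn2real (RN_deriv \<mu> \<nu> x)" for x
  have f: "integrable \<mu> f"
    unfolding f_def using \<mu> \<nu> ac
    by (intro sigma_finite_measure.integrable_real_RN_deriv prob_space_imp_sigma_finite prob_space.finite_measure)
      (auto simp: prob_measures_def)
  obtain h where h: "h \<in> borel_measurable V" and h_ae: "AE x in \<mu>. RN_deriv \<mu> \<nu> x = h x"
    using suff unfolding sufficient_for_def V_def by blast
  have "AE x in \<mu>. f x = enn2real (h x)"
    using h_ae by (auto simp: f_def elim!: eventually_mono)
  moreover have "(\<lambda>x. enn2real (h x)) \<in> borel_measurable V"
    using h by (rule borel_measurable_enn2real)
  ultimately obtain s where s: "\<And>i. simple_function V (s i)"
    and s_lim: "(\<lambda>i. \<integral>x. \<bar>f x - s i x\<bar> \<partial>\<mu>) \<longlonglongrightarrow> 0"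
    using simple_function_L1_approx_subalgebra[OF subalgebra_vimage_algebra[OF \<mu> T] f]
    unfolding V_def by blast
  have "\<forall>i. \<exists>Q. Q \<in> kernels \<and> (\<forall>x. Q (T x) = cond_prob \<mu> (s i -` {s i x}))"
    using cell_kernel[OF \<mu>] s unfolding V_def by metis
  then obtain Q where Q: "\<And>i. Q i \<in> kernels" "\<And>i x. Q i (T x) = cond_prob \<mu> (s i -` {s i x})"
    by metis
  have "\<bar>measure (distr \<nu> borel T \<bind> Q i) A - measure \<nu> A\<bar> \<le> 2 * (\<integral>x. \<bar>f x - s i x\<bar> \<partial>\<mu>)"
    if "A \<in> sets borel" for i A
    unfolding f_def using \<mu> \<nu> ac T s[of i, unfolded V_def] Q(1)[of i] Q(2)[of i] that
    by (rule abs_measure_bind_distr_cell_kernel_le)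
  moreover have "(\<lambda>i. 2 * (\<integral>x. \<bar>f x - s i x\<bar> \<partial>\<mu>)) \<longlonglongrightarrow> 0"
    using tendsto_mult_right_zero[OF s_lim, of 2] by (simp add: mult.commute)
  ultimately have "(\<lambda>i. tv_dist (distr \<nu> borel T \<bind> Q i) \<nu>) \<longlonglongrightarrow> 0"
    by (rule tv_dist_tendsto_zero)
  moreover have "distr \<mu> borel T \<bind> Q i = \<mu>" for i
    using \<mu> T s[of i, unfolded V_def] Q(1)[of i] Q(2)[of i] by (rule bind_distr_cell_kernel_eq)
  ultimately show ?thesis
    using divergence_le_of_recovery_kernels[where Q=Q, OF \<alpha>E dp \<mu> \<nu> distr_in_prob_measures[OF \<mu> T]
        distr_in_prob_measures[OF \<nu> T] Q(1)] by blast
qed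

lemma bij_sufficient_for:
  assumes "sets \<mu> = sets borel" "bij T" "inv T \<in> borel_measurable borel"
  shows "sufficient_for T \<mu> \<nu>"
proof -
  have "RN_deriv \<mu> \<nu> \<circ> inv T \<in> borel_measurable borel"
    using assms(1,3) by (simp cong: measurable_cong_sets)
  moreover have "T \<in> vimage_algebra UNIV T borel \<rightarrow>\<^sub>M borel"
    by (rule measurable_vimage_algebra1) simp
  ultimately have "RN_deriv \<mu> \<nu> \<circ> inv T \<circ> T \<in> borel_measurable (vimage_algebra UNIV T borel)"
    by (simp add: measurable_comp)
  moreover have "RN_deriv \<mu> \<nu> \<circ> inv T \<circ> T = RN_deriv \<mu> \<nu>"
    using assms(2) by (simp add: fun_eq_iff bij_is_inj)
  ultimately show ?thesis
    unfolding sufficient_for_def by auto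
qed

theorem proposition4p3:
  fixes \<alpha>E :: "'e::polish_space measure \<Rightarrow> 'e measure \<Rightarrow> ennreal"
    and \<alpha>F :: "'f::polish_space measure \<Rightarrow> 'f measure \<Rightarrow> ennreal"
    and \<mu> \<nu> :: "'e measure"
    and T :: "'e \<Rightarrow> 'f"
  assumes "divergence_pair \<alpha>E \<alpha>F"
    and "\<mu> \<in> prob_measures" and "\<nu> \<in> prob_measures"
    and "absolutely_continuous \<mu> \<nu>"
    and "T \<in> borel_measurable borel"
  shows "(sufficient_for T \<mu> \<nu> \<longrightarrow>
            \<alpha>F (distr \<nu> borel T) (distr \<mu> borel T) = \<alpha>E \<nu> \<mu>)
       \<and> (bij T \<and> inv T \<in> borel_measurable borel \<longrightarrow>
            \<alpha>F (distr \<nu> borel T) (distr \<mu> borel T) = \<alpha>E \<nu> \<mu>)"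
proof -
  have "divergence_on \<alpha>E" "data_processing \<alpha>E \<alpha>F" "data_processing \<alpha>F \<alpha>E"
    using assms(1) unfolding divergence_pair_def by auto
  then have "\<alpha>F (distr \<nu> borel T) (distr \<mu> borel T) = \<alpha>E \<nu> \<mu>" if "sufficient_for T \<mu> \<nu>"
    using assms(2-5) that
    by (intro antisym data_processing_distr_le sufficient_divergence_le_pushforward)
  moreover have "sufficient_for T \<mu> \<nu>" if "bij T" "inv T \<in> borel_measurable borel"
    using sets_prob_measures[OF assms(2)] that by (rule bij_sufficient_for)
  ultimately show ?thesis
    by blast
qed

end
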